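(* Let $\mathcal G=(V,E)$ be a constraint graph over $(\mathbb F,S)$ and let $W$ be a weight on $\mathcal G$ with finite support (i.e. only finitely many vertices and edges have nonzero weight; e.g. $\mathcal G$ finite). If $W(v_1)>0$ for some $v_1\in V$, then there exists a periodic treequence $x\in X_{\mathcal G}$ with $x(\mathrm{id})=v_1$.
   Context: $\mathbb F$ is a finitely generated free group with symmetric free generating set $S=B\cup B^{-1}$, $B$ a free basis. A constraint graph is $\mathcal G=(V,E)$ with $E\subset V\times V\times S$, $(v,w;s)$ denoting the directed edge from $v$ to $w$ labeled $s$. The graph subshift $X_{\mathcal G}\subset V^{\mathbb F}$ is the set of $x:\mathbb F\to V$ with $(x(f),x(fs);s)\in E$ for all $f,s$; shifts act by $(\sigma_gx)(f)=x(g^{-1}f)$, and $x$ is periodic if $\{f:\sigma_fx=x\}$ has finite index in $\mathbb F$. A weight on $\mathcal G$ is $W:V\cup E\to[0,\infty)$ (with $W(v,w;s)=0$ for $(v,w;s)\notin E$) such that for all $v\in V,s\in S$: $W(v)=\sum_{w}W(v,w;s)=\sum_wW(w,v;s)$, and $W(v,w;s)=W(w,v;s^{-1})$ for all $v,w,s$. *)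

theory Defs
  imports "HOL-Analysis.Analysis" "HOL-Algebra.Coset"
begin

text \<open>A letter (b, True) stands for the generator b, (b, False) for its inverse.\<close>
type_synonym 'b letter = "'b \<times> bool"
type_synonym 'b word = "'b letter list"

definition inv_letter :: "'b letter \<Rightarrow> 'b letter" where
  "inv_letter a = (fst a, \<not> snd a)"

definition gens :: "'b set \<Rightarrow> 'b letter set" where
  "gens B = B \<times> UNIV"

fun reduced :: "'b word \<Rightarrow> bool" where
  "reduced [] = True"
| "reduced [a] = True"
| "reduced (a # b # w) = (b \<noteq> inv_letter a \<and> reduced (b # w))"

fun push :: "'b letter \<Rightarrow> 'b word \<Rightarrow> 'b word" where
  "push a [] = [a]"
| "push a (b # w) = (if b = inv_letter a then w else a # b # w)"

definition reduce :: "'b word \<Rightarrow> 'b word" where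
  "reduce w = foldr push w []"

definition fg_mult :: "'b word \<Rightarrow> 'b word \<Rightarrow> 'b word" where
  "fg_mult u v = reduce (u @ v)"

definition fg_inv :: "'b word \<Rightarrow> 'b word" where
  "fg_inv w = rev (map inv_letter w)"

definition free_group :: "'b set \<Rightarrow> 'b word monoid" where
  "free_group B = \<lparr> carrier = {w. reduced w \<and> set w \<subseteq> gens B},
                    mult = fg_mult, one = [] \<rparr>"

definition constraint_graph :: "'b set \<Rightarrow> 'v set \<Rightarrow> ('v \<times> 'v \<times> 'b letter) set \<Rightarrow> bool" where
  "constraint_graph B V E \<longleftrightarrow> E \<subseteq> V \<times> V \<times> gens B"

definition graph_subshift ::
  "'b set \<Rightarrow> 'v set \<Rightarrow> ('v \<times> 'v \<times> 'b letter) set \<Rightarrow> ('b word \<Rightarrow> 'v) set" where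
  "graph_subshift B V E =
     {x. (\<forall>f \<in> carrier (free_group B). x f \<in> V) \<and>
         (\<forall>f \<in> carrier (free_group B). \<forall>s \<in> gens B. (x f, x (fg_mult f [s]), s) \<in> E)}"

definition shift :: "'b word \<Rightarrow> ('b word \<Rightarrow> 'v) \<Rightarrow> ('b word \<Rightarrow> 'v)" where
  "shift g x = (\<lambda>f. x (fg_mult (fg_inv g) f))"

definition stabilizer :: "'b set \<Rightarrow> ('b word \<Rightarrow> 'v) \<Rightarrow> 'b word set" where
  "stabilizer B x = {f \<in> carrier (free_group B).
                      \<forall>h \<in> carrier (free_group B). shift f x h = x h}"

definition periodic :: "'b set \<Rightarrow> ('b word \<Rightarrow> 'v) \<Rightarrow> bool" where
  "periodic B x \<longleftrightarrow> finite (rcosets\<^bsub>free_group B\<^esub> (stabilizer B x))"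

definition is_weight ::
  "'b set \<Rightarrow> 'v set \<Rightarrow> ('v \<times> 'v \<times> 'b letter) set \<Rightarrow>
   ('v \<Rightarrow> real) \<Rightarrow> ('v \<Rightarrow> 'v \<Rightarrow> 'b letter \<Rightarrow> real) \<Rightarrow> bool" where
  "is_weight B V E WV WE \<longleftrightarrow>
     (\<forall>v \<in> V. WV v \<ge> 0) \<and>
     (\<forall>v w s. WE v w s \<ge> 0) \<and>
     (\<forall>v w s. (v, w, s) \<notin> E \<longrightarrow> WE v w s = 0) \<and>
     (\<forall>v \<in> V. \<forall>s \<in> gens B.
        WV v = (\<Sum>\<^sub>\<infinity>w \<in> V. WE v w s) \<and> WV v = (\<Sum>\<^sub>\<infinity>w \<in> V. WE w v s)) \<and>
     (\<forall>v w. \<forall>s \<in> gens B. WE v w s = WE w v (inv_letter s))"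

definition finite_support ::
  "'v set \<Rightarrow> ('v \<Rightarrow> real) \<Rightarrow> ('v \<Rightarrow> 'v \<Rightarrow> 'b letter \<Rightarrow> real) \<Rightarrow> bool" where
  "finite_support V WV WE \<longleftrightarrow>
     finite {v \<in> V. WV v \<noteq> 0} \<and> finite {(v, w, s). WE v w s \<noteq> 0}"

end

theory Submission
  imports Defs
begin

(* Let U be the finite set of vertices of nonzero weight. For every basis letter b the
   matrix (W(v,w;b)) indexed by U has all row and column sums equal to the vertex weights W(v).
   These are homogeneous linear equations with coefficients in {0,1,-1}, so besides the real
   solution W they have a solution n, N_b in natural numbers with the same support (rational
   solutions are dense in the real ones; then clear denominators). Blowing up each vertex v into
   n(v) copies, each integral matrix N_b becomes a permutation pi_b of the finite set Omega of
   copies that only moves along edges of G labelled b. Letting the free group act on Omega through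
   the pi_b and labelling a group element f by the vertex underlying omega0 f, where omega0 is a
   copy of v1, gives a point of the graph subshift; its stabilizer has at most |Omega| right
   cosets, so the point is periodic. *)

section \<open>Reduced words\<close>

lemma inv_letter_inv [simp]: "inv_letter (inv_letter a) = a"
  by (simp add: inv_letter_def)

lemma inv_letter_gens: "s \<in> gens B \<Longrightarrow> inv_letter s \<in> gens B"
  by (auto simp: gens_def inv_letter_def)

lemma reduced_tl: "reduced (a # w) \<Longrightarrow> reduced w"
  by (cases w) auto

lemma reduced_push: "reduced w \<Longrightarrow> reduced (push a w)"
  by (cases w) (auto dest: reduced_tl)

lemma push_inv_cancel:
  assumes "reduced w" shows "push a (push (inv_letter a) w) = w"
proof (cases w)
  case Nil then show ?thesis by (simp add: inv_letter_def)
next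
  case (Cons d w')
  then show ?thesis using assms
    by (cases "d = a"; cases w') (auto simp: inv_letter_def prod_eq_iff)
qed

lemma reduced_foldr_push: "reduced r \<Longrightarrow> reduced (foldr push u r)"
  by (induction u) (auto intro: reduced_push)

lemma reduced_reduce: "reduced (reduce w)"
  unfolding reduce_def by (rule reduced_foldr_push) simp

lemma set_push: "set (push a w) \<subseteq> insert a (set w)"
  by (cases w) auto

lemma set_reduce: "set (reduce w) \<subseteq> set w"
proof -
  have "set (foldr push u r) \<subseteq> set u \<union> set r" for u r :: "'b word"
    by (induction u) (use set_push in fastforce)+
  then show ?thesis unfolding reduce_def by fastforce
qed

lemma reduce_Cons: "reduce (a # w) = push a (reduce w)"
  by (simp add: reduce_def)

lemma reduce_append: "reduce (u @ v) = foldr push u (reduce v)"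
  by (simp add: reduce_def)

lemma reduce_reduced: "reduced w \<Longrightarrow> reduce w = w"
proof (induction w)
  case Nil then show ?case by (simp add: reduce_def)
next
  case (Cons a w)
  then have "reduce w = w" by (auto dest: reduced_tl)
  then show ?case using Cons.prems by (cases w) (auto simp: reduce_Cons)
qed

lemma foldr_push_reduce: "reduced r \<Longrightarrow> foldr push (reduce u) r = foldr push u r"
proof (induction u)
  case Nil then show ?case by (simp add: reduce_def)
next
  case (Cons a u)
  show ?case
  proof (cases "\<exists>t. reduce u = inv_letter a # t")
    case True
    then obtain t where t: "reduce u = inv_letter a # t" by blast
    have "foldr push (a # u) r = push a (push (inv_letter a) (foldr push t r))"
      using Cons by (simp add: t)
    also have "\<dots> = foldr push t r"
      using Cons.prems by (simp add: push_inv_cancel reduced_foldr_push)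
    finally show ?thesis by (simp add: reduce_Cons t)
  next
    case False
    then have "push a (reduce u) = a # reduce u"
      by (cases "reduce u") auto
    then show ?thesis using Cons by (simp add: reduce_Cons)
  qed
qed

lemma fg_inv_Cons: "fg_inv (a # w) = fg_inv w @ [inv_letter a]"
  by (simp add: fg_inv_def)

lemma fg_inv_append: "fg_inv (u @ v) = fg_inv v @ fg_inv u"
  by (simp add: fg_inv_def)

lemma fg_inv_fg_inv [simp]: "fg_inv (fg_inv w) = w"
  by (simp add: fg_inv_def rev_map comp_def)

lemma foldr_push_inv_cancel: "reduced r \<Longrightarrow> foldr push (fg_inv w) (foldr push w r) = r"
proof (induction w)
  case Nil then show ?case by (simp add: fg_inv_def)
next
  case (Cons c w)
  have "foldr push (fg_inv (c # w)) (foldr push (c # w) r)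
      = foldr push (fg_inv w) (push (inv_letter c) (push (inv_letter (inv_letter c)) (foldr push w r)))"
    by (simp add: fg_inv_Cons)
  also have "\<dots> = foldr push (fg_inv w) (foldr push w r)"
    by (subst push_inv_cancel) (auto intro: reduced_foldr_push Cons.prems)
  finally show ?case using Cons by simp
qed

lemma fg_mult_inv_mult:
  assumes "reduced z" shows "fg_mult (fg_mult z (fg_inv a)) a = z"
proof -
  have "fg_mult (fg_mult z (fg_inv a)) a = foldr push (reduce (z @ fg_inv a)) (reduce a)"
    by (simp add: fg_mult_def reduce_append)
  also have "\<dots> = foldr push z (foldr push (fg_inv a) (foldr push a []))"
    using foldr_push_reduce[OF reduced_reduce, of "z @ fg_inv a" a] by (simp add: reduce_def)
  also have "\<dots> = reduce z"
    by (simp add: foldr_push_inv_cancel reduce_def)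
  finally show ?thesis using assms by (simp add: reduce_reduced)
qed

lemma fg_mult_closed:
  "set u \<subseteq> gens B \<Longrightarrow> set v \<subseteq> gens B \<Longrightarrow> fg_mult u v \<in> carrier (free_group B)"
  using set_reduce[of "u @ v"] by (auto simp: free_group_def fg_mult_def reduced_reduce)

lemma fg_inv_gens: "set w \<subseteq> gens B \<Longrightarrow> set (fg_inv w) \<subseteq> gens B"
  by (auto simp: fg_inv_def inv_letter_gens)

section \<open>Words acting through a family of permutations\<close>

definition letter_act :: "('b \<Rightarrow> 'o \<Rightarrow> 'o) \<Rightarrow> 'o set \<Rightarrow> 'b letter \<Rightarrow> 'o \<Rightarrow> 'o" where
  "letter_act \<pi> \<Omega> s = (if snd s then \<pi> (fst s) else inv_into \<Omega> (\<pi> (fst s)))"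

definition word_act :: "('b \<Rightarrow> 'o \<Rightarrow> 'o) \<Rightarrow> 'o set \<Rightarrow> 'o \<Rightarrow> 'b word \<Rightarrow> 'o" where
  "word_act \<pi> \<Omega> \<omega> w = foldl (\<lambda>\<omega> s. letter_act \<pi> \<Omega> s \<omega>) \<omega> w"

locale perms =
  fixes \<pi> :: "'b \<Rightarrow> 'o \<Rightarrow> 'o" and \<Omega> :: "'o set"
  assumes bij: "\<And>b. bij_betw (\<pi> b) \<Omega> \<Omega>"
begin

lemma letter_act_in: "\<omega> \<in> \<Omega> \<Longrightarrow> letter_act \<pi> \<Omega> s \<omega> \<in> \<Omega>"
  using bij[of "fst s"] by (auto simp: letter_act_def bij_betw_def intro: inv_into_into)

lemma letter_act_cancel:
  assumes "\<omega> \<in> \<Omega>" shows "letter_act \<pi> \<Omega> (inv_letter s) (letter_act \<pi> \<Omega> s \<omega>) = \<omega>"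
proof -
  have "inv_into \<Omega> (\<pi> b) (\<pi> b \<omega>) = \<omega>" "\<pi> b (inv_into \<Omega> (\<pi> b) \<omega>) = \<omega>" for b
    using bij[of b] \<open>\<omega> \<in> \<Omega>\<close> by (auto simp: bij_betw_def f_inv_into_f)
  then show ?thesis by (auto simp: letter_act_def inv_letter_def)
qed

lemma word_act_Nil [simp]: "word_act \<pi> \<Omega> \<omega> [] = \<omega>"
  by (simp add: word_act_def)

lemma word_act_Cons [simp]: "word_act \<pi> \<Omega> \<omega> (a # w) = word_act \<pi> \<Omega> (letter_act \<pi> \<Omega> a \<omega>) w"
  by (simp add: word_act_def)

lemma word_act_append: "word_act \<pi> \<Omega> \<omega> (u @ v) = word_act \<pi> \<Omega> (word_act \<pi> \<Omega> \<omega> u) v"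
  by (simp add: word_act_def)

lemma word_act_in: "\<omega> \<in> \<Omega> \<Longrightarrow> word_act \<pi> \<Omega> \<omega> w \<in> \<Omega>"
  by (induction w arbitrary: \<omega>) (auto intro: letter_act_in)

text \<open>The action factors through the free group: cancelling pairs act trivially.\<close>
lemma word_act_reduce: "\<omega> \<in> \<Omega> \<Longrightarrow> word_act \<pi> \<Omega> \<omega> (reduce w) = word_act \<pi> \<Omega> \<omega> w"
proof (induction w arbitrary: \<omega>)
  case Nil then show ?case by (simp add: reduce_def)
next
  case (Cons a w)
  have "word_act \<pi> \<Omega> \<omega> (push a u) = word_act \<pi> \<Omega> \<omega> (a # u)" for u
    using letter_act_cancel[OF Cons.prems, of a] by (cases u) auto
  then show ?case using Cons by (simp add: reduce_Cons letter_act_in)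
qed

lemma word_act_inv: "\<omega> \<in> \<Omega> \<Longrightarrow> word_act \<pi> \<Omega> (word_act \<pi> \<Omega> \<omega> w) (fg_inv w) = \<omega>"
  by (induction w arbitrary: \<omega>)
    (auto simp: fg_inv_Cons word_act_append letter_act_in letter_act_cancel fg_inv_def)

lemma word_act_inv_reduce:
  assumes "\<omega> \<in> \<Omega>" shows "word_act \<pi> \<Omega> \<omega> (fg_inv (reduce w)) = word_act \<pi> \<Omega> \<omega> (fg_inv w)"
proof -
  define \<omega>' where "\<omega>' = word_act \<pi> \<Omega> \<omega> (fg_inv (reduce w))"
  have \<omega>': "\<omega>' \<in> \<Omega>" using word_act_in[OF assms] by (simp add: \<omega>'_def)
  have "word_act \<pi> \<Omega> \<omega>' w = word_act \<pi> \<Omega> \<omega>' (reduce w)"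
    using word_act_reduce[OF \<omega>'] by simp
  also have "\<dots> = \<omega>"
    using word_act_inv[OF assms, of "fg_inv (reduce w)"] by (simp add: \<omega>'_def)
  finally have "word_act \<pi> \<Omega> (word_act \<pi> \<Omega> \<omega>' w) (fg_inv w) = word_act \<pi> \<Omega> \<omega> (fg_inv w)"
    by simp
  then show ?thesis using word_act_inv[OF \<omega>'] by (simp add: \<omega>'_def)
qed

end

section \<open>Configurations read off along an orbit\<close>

definition orbit_config ::
  "('b \<Rightarrow> 'o \<Rightarrow> 'o) \<Rightarrow> 'o set \<Rightarrow> ('o \<Rightarrow> 'v) \<Rightarrow> 'o \<Rightarrow> 'b word \<Rightarrow> 'v" where
  "orbit_config \<pi> \<Omega> L \<omega>0 f = L (word_act \<pi> \<Omega> \<omega>0 f)"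

context perms
begin

lemma orbit_config_mult:
  "\<omega>0 \<in> \<Omega> \<Longrightarrow>
   orbit_config \<pi> \<Omega> L \<omega>0 (fg_mult f g) = L (word_act \<pi> \<Omega> (word_act \<pi> \<Omega> \<omega>0 f) g)"
  by (simp add: orbit_config_def fg_mult_def word_act_reduce word_act_append)

lemma orbit_config_shift:
  "\<omega>0 \<in> \<Omega> \<Longrightarrow>
   shift h (orbit_config \<pi> \<Omega> L \<omega>0) g = L (word_act \<pi> \<Omega> (word_act \<pi> \<Omega> \<omega>0 (fg_inv h)) g)"
  by (simp add: shift_def orbit_config_mult)

lemma orbit_config_in_subshift:
  assumes \<omega>0: "\<omega>0 \<in> \<Omega>" and labels: "L ` \<Omega> \<subseteq> V"
    and edges: "\<And>b \<omega>. b \<in> B \<Longrightarrow> \<omega> \<in> \<Omega> \<Longrightarrow>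
       (L \<omega>, L (\<pi> b \<omega>), (b, True)) \<in> E \<and> (L (\<pi> b \<omega>), L \<omega>, (b, False)) \<in> E"
  shows "orbit_config \<pi> \<Omega> L \<omega>0 \<in> graph_subshift B V E"
  unfolding graph_subshift_def
proof (intro CollectI conjI ballI)
  fix f
  show "orbit_config \<pi> \<Omega> L \<omega>0 f \<in> V"
    using labels word_act_in[OF \<omega>0] by (auto simp: orbit_config_def)
next
  fix f s assume "s \<in> gens B"
  then obtain b sign where s: "s = (b, sign)" and b: "b \<in> B" by (auto simp: gens_def)
  define \<omega> where "\<omega> = word_act \<pi> \<Omega> \<omega>0 f"
  have \<omega>: "\<omega> \<in> \<Omega>" using word_act_in[OF \<omega>0] by (simp add: \<omega>_def)
  have "(L \<omega>, L (letter_act \<pi> \<Omega> s \<omega>), s) \<in> E"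
  proof (cases sign)
    case True
    then show ?thesis using edges[OF b \<omega>] by (simp add: s letter_act_def)
  next
    case False
    define \<omega>' where "\<omega>' = inv_into \<Omega> (\<pi> b) \<omega>"
    have "\<omega>' \<in> \<Omega>" "\<pi> b \<omega>' = \<omega>"
      using bij[of b] \<omega> unfolding \<omega>'_def bij_betw_def by (auto intro: inv_into_into f_inv_into_f)
    then show ?thesis using edges[OF b, of \<omega>'] False by (auto simp: s letter_act_def \<omega>'_def)
  qed
  then show "(orbit_config \<pi> \<Omega> L \<omega>0 f, orbit_config \<pi> \<Omega> L \<omega>0 (fg_mult f [s]), s) \<in> E"
    using orbit_config_mult[OF \<omega>0, of L f "[s]"] by (simp add: \<omega>_def orbit_config_def)
qed

text \<open>The right coset of the stabilizer containing \<open>a\<close> is determined by the point \<open>\<omega>\<^sub>0 \<cdot> a\<close>.\<close>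
lemma stabilizer_coset_subset:
  fixes B :: "'b set" and L :: "'o \<Rightarrow> 'v" and \<omega>0 :: 'o
  defines "G \<equiv> free_group B" and "H \<equiv> stabilizer B (orbit_config \<pi> \<Omega> L \<omega>0)"
  assumes \<omega>0: "\<omega>0 \<in> \<Omega>" and a: "a \<in> carrier G" and a': "a' \<in> carrier G"
    and same_point: "word_act \<pi> \<Omega> \<omega>0 a = word_act \<pi> \<Omega> \<omega>0 a'"
  shows "H #>\<^bsub>G\<^esub> a \<subseteq> H #>\<^bsub>G\<^esub> a'"
proof
  fix z assume "z \<in> H #>\<^bsub>G\<^esub> a"
  then obtain h where h: "h \<in> H" and z: "z = fg_mult h a"
    by (auto simp: r_coset_def G_def free_group_def)
  have hG: "h \<in> carrier G" using h by (simp add: H_def stabilizer_def G_def)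
  define h' where "h' = fg_mult z (fg_inv a')"
  have zG: "z \<in> carrier G"
    using hG a fg_mult_closed[of h B a] by (simp add: z G_def free_group_def)
  have h'G: "h' \<in> carrier G"
    using zG a' fg_mult_closed[of z B "fg_inv a'"] fg_inv_gens[of a' B]
    by (simp add: h'_def G_def free_group_def)
  have "word_act \<pi> \<Omega> \<omega>0 (fg_inv h') = word_act \<pi> \<Omega> \<omega>0 (fg_inv (z @ fg_inv a'))"
    by (simp add: h'_def fg_mult_def word_act_inv_reduce \<omega>0)
  also have "\<dots> = word_act \<pi> \<Omega> (word_act \<pi> \<Omega> \<omega>0 a) (fg_inv z)"
    by (simp add: fg_inv_append word_act_append same_point)
  also have "\<dots> = word_act \<pi> \<Omega> \<omega>0 (fg_inv h)"
    using word_act_in[OF \<omega>0]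
    by (simp add: z fg_mult_def word_act_inv_reduce fg_inv_append word_act_append word_act_inv \<omega>0)
  finally have "shift h' (orbit_config \<pi> \<Omega> L \<omega>0) = shift h (orbit_config \<pi> \<Omega> L \<omega>0)"
    by (simp add: fun_eq_iff orbit_config_shift \<omega>0)
  then have "h' \<in> H" using h h'G by (simp add: H_def stabilizer_def G_def)
  moreover have "fg_mult h' a' = z"
    using zG by (simp add: h'_def fg_mult_inv_mult G_def free_group_def)
  ultimately show "z \<in> H #>\<^bsub>G\<^esub> a'" by (auto simp: r_coset_def G_def free_group_def)
qed

text \<open>Hence a finite set \<open>\<Omega>\<close> bounds the number of cosets: the configuration is periodic.\<close>
lemma orbit_config_periodic:
  assumes fin: "finite \<Omega>" and \<omega>0: "\<omega>0 \<in> \<Omega>"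
  shows "periodic B (orbit_config \<pi> \<Omega> L \<omega>0)"
proof -
  define G where "G = free_group B"
  define H where "H = stabilizer B (orbit_config \<pi> \<Omega> L \<omega>0)"
  define rep where "rep \<omega> = (SOME a. a \<in> carrier G \<and> word_act \<pi> \<Omega> \<omega>0 a = \<omega>)" for \<omega>
  have "H #>\<^bsub>G\<^esub> a = H #>\<^bsub>G\<^esub> rep (word_act \<pi> \<Omega> \<omega>0 a)" if a: "a \<in> carrier G" for a
  proof -
    have "rep (word_act \<pi> \<Omega> \<omega>0 a) \<in> carrier G \<and>
          word_act \<pi> \<Omega> \<omega>0 (rep (word_act \<pi> \<Omega> \<omega>0 a)) = word_act \<pi> \<Omega> \<omega>0 a"
      unfolding rep_def by (rule someI[of _ a]) (simp add: a)
    then show ?thesis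
      using stabilizer_coset_subset \<omega>0 a unfolding G_def H_def by (metis subset_antisym)
  qed
  then have "rcosets\<^bsub>G\<^esub> H \<subseteq> (\<lambda>\<omega>. H #>\<^bsub>G\<^esub> rep \<omega>) ` \<Omega>"
    using word_act_in[OF \<omega>0] unfolding RCOSETS_def by blast
  then show ?thesis
    unfolding periodic_def G_def[symmetric] H_def[symmetric]
    using fin by (meson finite_imageI finite_subset)
qed

end

section \<open>Rational and integral solutions of rational linear systems\<close>

text \<open>The equation \<open>e\<close> with the variable \<open>j\<close> eliminated by means of the equation \<open>c\<close>
  (one step of Gaussian elimination, assuming \<open>c\<^sub>j \<noteq> 0\<close>).\<close>
definition eliminate :: "('i \<Rightarrow> real) \<Rightarrow> 'i \<Rightarrow> ('i \<Rightarrow> real) \<Rightarrow> 'i \<Rightarrow> real" where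
  "eliminate c j e = (\<lambda>i. e i - e j / c j * c i)"

lemma eliminate_sum:
  "(\<Sum>i\<in>I. eliminate c j e i * z i) = (\<Sum>i\<in>I. e i * z i) - e j / c j * (\<Sum>i\<in>I. c i * z i)"
  by (simp add: eliminate_def algebra_simps sum_subtractf sum_distrib_left)

lemma eliminate_rational:
  "\<forall>i. c i \<in> \<rat> \<Longrightarrow> \<forall>i. e i \<in> \<rat> \<Longrightarrow> eliminate c j e i \<in> \<rat>"
  by (simp add: eliminate_def Rats_diff Rats_mult Rats_divide)

lemma solve_for_coordinate:
  fixes c x y' :: "'i \<Rightarrow> real"
  assumes I: "finite I" and j: "j \<in> I" "c j \<noteq> 0" and x: "(\<Sum>i\<in>I. c i * x i) = 0"
    and close: "\<forall>i\<in>I - {j}. \<bar>y' i - x i\<bar> < \<delta>" and \<delta>: "\<delta> > 0"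
  defines "y \<equiv> y'(j := - (\<Sum>i\<in>I - {j}. c i * y' i) / c j)"
  shows "(\<Sum>i\<in>I. c i * y i) = 0"
    and "(\<Sum>i\<in>I. e i * y i) = (\<Sum>i\<in>I. eliminate c j e i * y' i)"
    and "\<bar>y j - x j\<bar> \<le> (\<Sum>i\<in>I. \<bar>c i / c j\<bar>) * \<delta>"
proof -
  have split: "(\<Sum>i\<in>I. f i) = f j + (\<Sum>i\<in>I - {j}. f i)" for f :: "'i \<Rightarrow> real"
    using I j(1) by (simp add: sum.remove)
  show cy: "(\<Sum>i\<in>I. c i * y i) = 0"
    using j(2) by (subst split) (simp add: y_def)
  have "(\<Sum>i\<in>I. e i * y i) = (\<Sum>i\<in>I. eliminate c j e i * y i)"
    using eliminate_sum[where I = I and c = c and j = j and e = e and z = y] cy by simp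
  also have "\<dots> = (\<Sum>i\<in>I. eliminate c j e i * y' i)"
    by (rule sum.cong) (auto simp: y_def eliminate_def j(2))
  finally show "(\<Sum>i\<in>I. e i * y i) = (\<Sum>i\<in>I. eliminate c j e i * y' i)" .
  have xj: "x j = - (\<Sum>i\<in>I - {j}. c i * x i) / c j"
    using x j(2) by (subst (asm) split) (simp add: field_simps)
  have "y j - x j = - (\<Sum>i\<in>I - {j}. c i / c j * (y' i - x i))"
    using j(2) by (simp add: y_def xj field_simps sum_divide_distrib[symmetric] sum_subtractf
        sum_distrib_left)
  then have "\<bar>y j - x j\<bar> \<le> (\<Sum>i\<in>I - {j}. \<bar>c i / c j\<bar> * \<bar>y' i - x i\<bar>)"
    using sum_abs[of "\<lambda>i. c i / c j * (y' i - x i)" "I - {j}"] by (simp add: abs_mult)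
  also have "\<dots> \<le> (\<Sum>i\<in>I - {j}. \<bar>c i / c j\<bar> * \<delta>)"
    using close by (intro sum_mono mult_left_mono) (auto intro: less_imp_le)
  also have "\<dots> \<le> (\<Sum>i\<in>I. \<bar>c i / c j\<bar>) * \<delta>"
    unfolding sum_distrib_right[symmetric] using \<delta> I by (intro mult_right_mono sum_mono2) auto
  finally show "\<bar>y j - x j\<bar> \<le> (\<Sum>i\<in>I. \<bar>c i / c j\<bar>) * \<delta>" .
qed

text \<open>Rational solutions are dense in the real solutions of a homogeneous system with rational
  coefficients, by induction on the number of equations: eliminate one variable using the first
  equation, approximate a solution of the smaller system, and back-substitute.\<close>
lemma rational_solutions_dense:
  fixes x :: "'i \<Rightarrow> real" and cs :: "('i \<Rightarrow> real) list"
  assumes I: "finite I" and rat: "\<forall>c\<in>set cs. \<forall>i. c i \<in> \<rat>"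
    and sol: "\<forall>c\<in>set cs. (\<Sum>i\<in>I. c i * x i) = 0" and \<epsilon>: "\<epsilon> > 0"
  shows "\<exists>y. (\<forall>i. y i \<in> \<rat>) \<and> (\<forall>c\<in>set cs. (\<Sum>i\<in>I. c i * y i) = 0) \<and> (\<forall>i\<in>I. \<bar>y i - x i\<bar> < \<epsilon>)"
  using rat sol \<epsilon>
proof (induction "length cs" arbitrary: cs x \<epsilon>)
  case 0
  have "\<exists>r. r \<in> \<rat> \<and> x i - \<epsilon> < r \<and> r < x i + \<epsilon>" for i
    using Rats_dense_in_real[of "x i - \<epsilon>" "x i + \<epsilon>"] 0 by auto
  then obtain y where y: "\<And>i. y i \<in> \<rat> \<and> x i - \<epsilon> < y i \<and> y i < x i + \<epsilon>" by metis
  then have "\<bar>y i - x i\<bar> < \<epsilon>" for i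
    unfolding abs_less_iff using y[of i] by linarith
  then show ?case using 0 y by (intro exI[of _ y]) auto
next
  case (Suc n)
  then obtain c cs' where cs: "cs = c # cs'" and len: "n = length cs'" by (cases cs) auto
  show ?case
  proof (cases "\<forall>i\<in>I. c i = 0")
    case True
    then show ?thesis using Suc.hyps(1)[OF len, of x \<epsilon>] Suc.prems cs by auto
  next
    case False
    then obtain j where j: "j \<in> I" "c j \<noteq> 0" by blast
    have cx: "(\<Sum>i\<in>I. c i * x i) = 0" and c_rat: "\<forall>i. c i \<in> \<rat>" using Suc.prems cs by auto
    define K where "K = (\<Sum>i\<in>I. \<bar>c i / c j\<bar>)"
    have K: "K \<ge> 0" unfolding K_def by (simp add: sum_nonneg)
    define \<delta> where "\<delta> = \<epsilon> / (1 + K)"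
    have \<delta>: "\<delta> > 0" "\<delta> \<le> \<epsilon>" "K * \<delta> < \<epsilon>"
      using K Suc.prems by (auto simp: \<delta>_def field_simps)
    obtain y' where y'_rat: "\<forall>i. y' i \<in> \<rat>"
      and y'_sol: "\<forall>e\<in>set cs'. (\<Sum>i\<in>I. eliminate c j e i * y' i) = 0"
      and y'_close: "\<forall>i\<in>I. \<bar>y' i - x i\<bar> < \<delta>"
      using Suc.hyps(1)[of "map (eliminate c j) cs'" x \<delta>] len Suc.prems cs c_rat cx \<delta>(1)
      by (auto simp: eliminate_sum eliminate_rational)
    define y where "y = y'(j := - (\<Sum>i\<in>I - {j}. c i * y' i) / c j)"
    note back_subst = solve_for_coordinate[OF I j cx _ \<delta>(1), of y', folded y_def K_def]
    have "\<bar>y i - x i\<bar> < \<epsilon>" if "i \<in> I" for i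
      using y'_close back_subst(3) that \<delta> by (cases "i = j") (auto simp: y_def)
    moreover have "\<forall>i. y i \<in> \<rat>"
      using y'_rat c_rat by (auto simp: y_def intro!: Rats_divide Rats_sum Rats_mult)
    ultimately show ?thesis
      using back_subst(1,2) y'_close y'_sol cs by (intro exI[of _ y]) auto
  qed
qed

text \<open>A nonnegative real solution can be replaced by a nonnegative rational one with the same
  support: approximate it on its support closely enough to keep those entries positive.\<close>
lemma rational_solution_same_support:
  fixes x :: "'i \<Rightarrow> real" and cs :: "('i \<Rightarrow> real) list"
  assumes I: "finite I" and rat: "\<forall>c\<in>set cs. \<forall>i. c i \<in> \<rat>"
    and sol: "\<forall>c\<in>set cs. (\<Sum>i\<in>I. c i * x i) = 0" and nonneg: "\<forall>i\<in>I. x i \<ge> 0"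
  shows "\<exists>y. (\<forall>i\<in>I. y i \<in> \<rat> \<and> y i \<ge> 0 \<and> (y i = 0 \<longleftrightarrow> x i = 0)) \<and>
             (\<forall>c\<in>set cs. (\<Sum>i\<in>I. c i * y i) = 0)"
proof -
  define P where "P = {i \<in> I. x i \<noteq> 0}"
  have P: "finite P" "P \<subseteq> I" using I by (auto simp: P_def)
  have restrict: "(\<Sum>i\<in>I. c i * z i) = (\<Sum>i\<in>P. c i * z i)" if "\<forall>i\<in>I - P. z i = 0" for c z :: "'i \<Rightarrow> real"
    using that by (intro sum.mono_neutral_right I P(2)) auto
  define \<epsilon> where "\<epsilon> = Min (insert 1 (x ` P))"
  have \<epsilon>: "\<epsilon> > 0" "\<And>i. i \<in> P \<Longrightarrow> \<epsilon> \<le> x i"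
    using P nonneg unfolding \<epsilon>_def by (subst Min_gr_iff; force simp: P_def less_le) (simp add: P(1))
  have "\<forall>c\<in>set cs. (\<Sum>i\<in>P. c i * x i) = 0"
    using sol restrict[of x] by (simp add: P_def)
  then obtain y where y_rat: "\<forall>i. y i \<in> \<rat>" and y_sol: "\<forall>c\<in>set cs. (\<Sum>i\<in>P. c i * y i) = 0"
    and y_close: "\<forall>i\<in>P. \<bar>y i - x i\<bar> < \<epsilon>"
    using rational_solutions_dense[OF P(1) rat _ \<epsilon>(1)] by blast
  have y_pos: "y i > 0" if "i \<in> P" for i
    using y_close \<epsilon>(2)[OF that] that by (force simp: abs_less_iff)
  define y0 where "y0 i = (if i \<in> P then y i else 0)" for i
  have "(\<Sum>i\<in>I. c i * y0 i) = 0" if "c \<in> set cs" for c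
    using restrict[of y0] y_sol that by (simp add: y0_def)
  moreover have "y0 i \<in> \<rat> \<and> y0 i \<ge> 0 \<and> (y0 i = 0 \<longleftrightarrow> x i = 0)" if "i \<in> I" for i
    using y_rat y_pos[of i] that by (auto simp: y0_def P_def less_le)
  ultimately show ?thesis by blast
qed

lemma common_denominator:
  assumes "finite I" and "\<forall>i\<in>I. y i \<in> \<rat>"
  shows "\<exists>D::nat. D > 0 \<and> (\<forall>i\<in>I. real D * y i \<in> \<int>)"
  using assms
proof (induction I rule: finite_induct)
  case empty then show ?case by (intro exI[of _ 1]) auto
next
  case (insert a F)
  then obtain D where D: "D > 0" "\<forall>i\<in>F. real D * y i \<in> \<int>" by auto
  obtain p q where pq: "q > 0" "y a = of_int p / of_int q" using insert.prems Rats_cases' by blast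
  define D' where "D' = D * nat q"
  have D': "real D' = real D * of_int q" using pq by (simp add: D'_def)
  have "real D' * y i \<in> \<int>" if "i \<in> F" for i
    using D(2) that Ints_mult[OF _ Ints_of_int] by (simp add: D' mult.commute mult.left_commute)
  moreover have "real D' * y a \<in> \<int>" using pq by (simp add: D')
  moreover have "D' > 0" using D pq by (simp add: D'_def)
  ultimately show ?case by (intro exI[of _ D']) auto
qed

text \<open>Scaling by a common denominator: a finite homogeneous rational system with a nonnegative
  real solution has a solution in natural numbers with the same support.\<close>
lemma nat_solution_same_support:
  fixes x :: "'i \<Rightarrow> real" and C :: "('i \<Rightarrow> real) set"
  assumes I: "finite I" and C: "finite C" and rat: "\<forall>c\<in>C. \<forall>i. c i \<in> \<rat>"
    and sol: "\<forall>c\<in>C. (\<Sum>i\<in>I. c i * x i) = 0" and nonneg: "\<forall>i\<in>I. x i \<ge> 0"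
  shows "\<exists>m :: 'i \<Rightarrow> nat. (\<forall>i\<in>I. m i = 0 \<longleftrightarrow> x i = 0) \<and>
             (\<forall>c\<in>C. (\<Sum>i\<in>I. c i * real (m i)) = 0)"
proof -
  obtain cs where cs: "set cs = C" using finite_list[OF C] by blast
  obtain y where y: "\<forall>i\<in>I. y i \<in> \<rat> \<and> y i \<ge> 0 \<and> (y i = 0 \<longleftrightarrow> x i = 0)"
    and y_sol: "\<forall>c\<in>C. (\<Sum>i\<in>I. c i * y i) = 0"
    using rational_solution_same_support[OF I, of cs x] rat sol nonneg cs by auto
  obtain D :: nat where D: "D > 0" "\<forall>i\<in>I. real D * y i \<in> \<int>"
    using common_denominator[OF I, of y] y by blast
  define m where "m i = nat \<lfloor>real D * y i\<rfloor>" for i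
  have m: "real (m i) = real D * y i" if "i \<in> I" for i
    using D(2) y that unfolding m_def by (metis Ints_cases floor_of_int of_nat_nat zero_le_mult_iff
        of_nat_0_le_iff of_int_0_le_iff)
  have "(\<Sum>i\<in>I. c i * real (m i)) = real D * (\<Sum>i\<in>I. c i * y i)" for c
    by (simp add: m sum_distrib_left algebra_simps)
  moreover have "m i = 0 \<longleftrightarrow> x i = 0" if "i \<in> I" for i
    using m[OF that] y that D(1) by (metis of_nat_0 mult_eq_0_iff of_nat_eq_0_iff not_gr0)
  ultimately show ?thesis using y_sol by (intro exI[of _ m]) auto
qed

section \<open>Balanced integral weights\<close>

definition balance :: "'i set \<Rightarrow> 'i set \<Rightarrow> 'i \<Rightarrow> real" where
  "balance P Q i = of_bool (i \<in> P) - of_bool (i \<in> Q)"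

lemma balance_sum:
  assumes "finite I" "P \<subseteq> I" "Q \<subseteq> I"
  shows "(\<Sum>i\<in>I. balance P Q i * z i) = sum z P - sum z Q"
  using assms by (simp add: balance_def left_diff_distrib sum_subtractf inf.absorb2)

lemma balance_rational: "balance P Q i \<in> \<rat>"
  by (simp add: balance_def)

lemma nat_balanced_counts:
  fixes a :: "'v \<Rightarrow> real" and A :: "'b \<Rightarrow> 'v \<Rightarrow> 'v \<Rightarrow> real"
  assumes U: "finite U" and B: "finite B"
    and a_nonneg: "\<forall>v\<in>U. a v \<ge> 0" and A_nonneg: "\<forall>b\<in>B. \<forall>v\<in>U. \<forall>w\<in>U. A b v w \<ge> 0"
    and A_rows: "\<forall>b\<in>B. \<forall>v\<in>U. (\<Sum>w\<in>U. A b v w) = a v"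
    and A_cols: "\<forall>b\<in>B. \<forall>v\<in>U. (\<Sum>w\<in>U. A b w v) = a v"
  shows "\<exists>(n :: 'v \<Rightarrow> nat) (N :: 'b \<Rightarrow> 'v \<Rightarrow> 'v \<Rightarrow> nat). (\<forall>v\<in>U. n v = 0 \<longleftrightarrow> a v = 0) \<and>
               (\<forall>b\<in>B. \<forall>v\<in>U. \<forall>w\<in>U. N b v w = 0 \<longleftrightarrow> A b v w = 0) \<and>
               (\<forall>b\<in>B. \<forall>v\<in>U. (\<Sum>w\<in>U. N b v w) = n v) \<and>
               (\<forall>b\<in>B. \<forall>v\<in>U. (\<Sum>w\<in>U. N b w v) = n v)"
proof -
  text \<open>Unknowns: one per vertex and one per matrix entry.\<close>
  define I :: "('v + 'b \<times> 'v \<times> 'v) set" where "I = Inl ` U \<union> Inr ` (B \<times> U \<times> U)"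
  define x where "x i = (case i of Inl v \<Rightarrow> a v | Inr (b, v, w) \<Rightarrow> A b v w)" for i
  define row :: "'b \<Rightarrow> 'v \<Rightarrow> ('v + 'b \<times> 'v \<times> 'v) set" where "row b v = (\<lambda>w. Inr (b, v, w)) ` U" for b v
  define col :: "'b \<Rightarrow> 'v \<Rightarrow> ('v + 'b \<times> 'v \<times> 'v) set" where "col b v = (\<lambda>w. Inr (b, w, v)) ` U" for b v
  define C where "C = (\<lambda>(b, v). balance {Inl v} (row b v)) ` (B \<times> U) \<union>
                      (\<lambda>(b, v). balance {Inl v} (col b v)) ` (B \<times> U)"
  have I: "finite I" using U B by (simp add: I_def)
  have eqs: "(\<Sum>i\<in>I. balance {Inl v} (row b v) i * z i) = z (Inl v) - (\<Sum>w\<in>U. z (Inr (b, v, w)))"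
            "(\<Sum>i\<in>I. balance {Inl v} (col b v) i * z i) = z (Inl v) - (\<Sum>w\<in>U. z (Inr (b, w, v)))"
    if "b \<in> B" "v \<in> U" for b v and z :: "_ \<Rightarrow> real"
  proof -
    have "{Inl v} \<subseteq> I" "row b v \<subseteq> I" "col b v \<subseteq> I"
      using that by (auto simp: I_def row_def col_def)
    moreover have "sum z (row b v) = (\<Sum>w\<in>U. z (Inr (b, v, w)))"
      "sum z (col b v) = (\<Sum>w\<in>U. z (Inr (b, w, v)))"
      by (simp_all add: row_def col_def sum.reindex inj_on_def)
    ultimately show "(\<Sum>i\<in>I. balance {Inl v} (row b v) i * z i) = z (Inl v) - (\<Sum>w\<in>U. z (Inr (b, v, w)))"
      "(\<Sum>i\<in>I. balance {Inl v} (col b v) i * z i) = z (Inl v) - (\<Sum>w\<in>U. z (Inr (b, w, v)))"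
      by (simp_all add: balance_sum[OF I])
  qed
  have row_eq: "balance {Inl v} (row b v) \<in> C" and col_eq: "balance {Inl v} (col b v) \<in> C"
    if "b \<in> B" "v \<in> U" for b v
    using that by (auto simp: C_def)
  have sol: "\<forall>c\<in>C. (\<Sum>i\<in>I. c i * x i) = 0"
    unfolding C_def using A_rows A_cols by (auto simp: eqs x_def)
  have nonneg: "\<forall>i\<in>I. x i \<ge> 0" using a_nonneg A_nonneg by (auto simp: I_def x_def)
  have C: "finite C" using U B by (simp add: C_def)
  have rat: "\<forall>c\<in>C. \<forall>i. c i \<in> \<rat>" by (auto simp: C_def balance_rational)
  obtain m :: "_ \<Rightarrow> nat" where m: "\<forall>i\<in>I. m i = 0 \<longleftrightarrow> x i = 0"
    and m_sol: "\<forall>c\<in>C. (\<Sum>i\<in>I. c i * real (m i)) = 0"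
    using nat_solution_same_support[OF I C rat sol nonneg] by blast
  define n where "n v = m (Inl v)" for v
  define N where "N b v w = m (Inr (b, v, w))" for b v w
  have "real (\<Sum>w\<in>U. N b v w) = real (n v) \<and> real (\<Sum>w\<in>U. N b w v) = real (n v)"
    if "b \<in> B" "v \<in> U" for b v
    using m_sol row_eq[OF that] col_eq[OF that] eqs[OF that, of "\<lambda>i. real (m i)"]
    by (simp add: n_def N_def)
  then have sums: "(\<Sum>w\<in>U. N b v w) = n v \<and> (\<Sum>w\<in>U. N b w v) = n v" if "b \<in> B" "v \<in> U" for b v
    using that by (simp only: of_nat_eq_iff)
  have n_zero: "n v = 0 \<longleftrightarrow> a v = 0" if "v \<in> U" for v
    using m that by (auto simp: n_def x_def I_def)
  have N_zero: "N b v w = 0 \<longleftrightarrow> A b v w = 0" if "b \<in> B" "v \<in> U" "w \<in> U" for b v w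
    using m that by (force simp: N_def x_def I_def)
  show ?thesis
    using sums n_zero N_zero by (intro exI[of _ n] exI[of _ N] conjI ballI) simp_all
qed

section \<open>Permutations realizing a count matrix\<close>

lemma bij_betw_fiberwise:
  assumes "\<And>v. v \<in> U \<Longrightarrow> bij_betw (h v) (A v) (C v)"
  shows "bij_betw (\<lambda>(v, a). (v, h v a)) (Sigma U A) (Sigma U C)"
proof -
  have "inj_on (\<lambda>(v, a). (v, h v a)) (Sigma U A)"
    using assms by (auto simp: inj_on_def bij_betw_def)
  moreover have "(\<lambda>(v, a). (v, h v a)) ` Sigma U A = Sigma U C"
    using assms by (fastforce simp: bij_betw_def image_iff)
  ultimately show ?thesis by (simp add: bij_betw_def)
qed

text \<open>Blow up each vertex \<open>v\<close> into \<open>n v\<close> copies. Then there is a permutation of the copies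
  that sends a copy of \<open>v\<close> to a copy of \<open>w\<close> only if \<open>N v w > 0\<close>: number the \<open>N v w\<close> parallel
  edges once from the point of view of their source and once from that of their target.\<close>
lemma perm_of_count_matrix:
  fixes U :: "'v set" and n :: "'v \<Rightarrow> nat" and N :: "'v \<Rightarrow> 'v \<Rightarrow> nat"
  assumes U: "finite U"
    and rows: "\<And>v. v \<in> U \<Longrightarrow> (\<Sum>w\<in>U. N v w) = n v"
    and cols: "\<And>v. v \<in> U \<Longrightarrow> (\<Sum>w\<in>U. N w v) = n v"
  defines "\<Omega> \<equiv> Sigma U (\<lambda>v. {..<n v})"
  shows "\<exists>\<pi>. bij_betw \<pi> \<Omega> \<Omega> \<and> (\<forall>\<omega>\<in>\<Omega>. N (fst \<omega>) (fst (\<pi> \<omega>)) > 0)"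
proof -
  define out where "out = Sigma U (\<lambda>v. Sigma U (\<lambda>w. {..<N v w}))"
  define inc where "inc = Sigma U (\<lambda>w. Sigma U (\<lambda>v. {..<N v w}))"
  have "\<forall>v\<in>U. \<exists>h. bij_betw h (Sigma U (\<lambda>w. {..<N v w})) {..<n v}"
    using U rows by (auto intro!: finite_same_card_bij)
  then obtain h where h: "\<And>v. v \<in> U \<Longrightarrow> bij_betw (h v) (Sigma U (\<lambda>w. {..<N v w})) {..<n v}"
    by metis
  have "\<forall>w\<in>U. \<exists>h. bij_betw h (Sigma U (\<lambda>v. {..<N v w})) {..<n w}"
    using U cols by (auto intro!: finite_same_card_bij)
  then obtain h' where h': "\<And>w. w \<in> U \<Longrightarrow> bij_betw (h' w) (Sigma U (\<lambda>v. {..<N v w})) {..<n w}"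
    by metis
  define f where "f = (\<lambda>(v, a). (v, h v a))"
  define f' where "f' = (\<lambda>(w, a). (w, h' w a))"
  define swap where "swap = (\<lambda>(v::'v, w::'v, k::nat). (w, v, k))"
  have f: "bij_betw f out \<Omega>"
    unfolding f_def out_def \<Omega>_def by (rule bij_betw_fiberwise) (rule h)
  have f': "bij_betw f' inc \<Omega>"
    unfolding f'_def inc_def \<Omega>_def by (rule bij_betw_fiberwise) (rule h')
  have swap: "bij_betw swap out inc"
    unfolding bij_betw_def inj_on_def swap_def out_def inc_def by (auto simp: image_iff)
  define \<pi> where "\<pi> = f' \<circ> swap \<circ> inv_into out f"
  have "bij_betw \<pi> \<Omega> \<Omega>"
    unfolding \<pi>_def by (rule bij_betw_trans[OF bij_betw_inv_into[OF f] bij_betw_trans[OF swap f']])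
  moreover have "N (fst \<omega>) (fst (\<pi> \<omega>)) > 0" if "\<omega> \<in> \<Omega>" for \<omega>
  proof -
    have "\<omega> \<in> f ` out" using f that by (simp add: bij_betw_def)
    then have e: "inv_into out f \<omega> \<in> out" "f (inv_into out f \<omega>) = \<omega>"
      by (auto intro: inv_into_into f_inv_into_f)
    obtain v w k where vwk: "inv_into out f \<omega> = (v, w, k)" by (cases "inv_into out f \<omega>") auto
    have "fst \<omega> = v" using e(2) vwk by (auto simp: f_def)
    moreover have "fst (\<pi> \<omega>) = w" by (simp add: \<pi>_def vwk swap_def f'_def)
    moreover have "k < N v w" using e(1) vwk by (auto simp: out_def)
    ultimately show ?thesis by simp
  qed
  ultimately show ?thesis by blast
qed

lemma perms_of_count_matrices:
  fixes U :: "'v set" and n :: "'v \<Rightarrow> nat" and N :: "'b \<Rightarrow> 'v \<Rightarrow> 'v \<Rightarrow> nat"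
  assumes U: "finite U"
    and rows: "\<forall>b\<in>B. \<forall>v\<in>U. (\<Sum>w\<in>U. N b v w) = n v"
    and cols: "\<forall>b\<in>B. \<forall>v\<in>U. (\<Sum>w\<in>U. N b w v) = n v"
  defines "\<Omega> \<equiv> Sigma U (\<lambda>v. {..<n v})"
  shows "\<exists>\<pi>. (\<forall>b. bij_betw (\<pi> b) \<Omega> \<Omega>) \<and> (\<forall>b\<in>B. \<forall>\<omega>\<in>\<Omega>. N b (fst \<omega>) (fst (\<pi> b \<omega>)) > 0)"
proof -
  have "\<exists>p. bij_betw p \<Omega> \<Omega> \<and> (b \<in> B \<longrightarrow> (\<forall>\<omega>\<in>\<Omega>. N b (fst \<omega>) (fst (p \<omega>)) > 0))" for b
  proof (cases "b \<in> B")
    case True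
    then show ?thesis using perm_of_count_matrix[OF U, of "N b" n] rows cols
      unfolding \<Omega>_def by blast
  qed (auto intro: exI[of _ id])
  then show ?thesis by metis
qed

section \<open>Finitely supported weights\<close>

lemma infsum_eq_sum_superset:
  fixes f :: "'a \<Rightarrow> real"
  assumes "finite S" "S \<subseteq> A" "\<And>x. x \<in> A - S \<Longrightarrow> f x = 0"
  shows "(\<Sum>\<^sub>\<infinity>x\<in>A. f x) = sum f S"
proof -
  have "(\<Sum>\<^sub>\<infinity>x\<in>A. f x) = (\<Sum>\<^sub>\<infinity>x\<in>S. f x)"
    by (rule infsum_cong_neutral) (use assms in auto)
  then show ?thesis using assms(1) by simp
qed

context
  fixes B :: "'b set" and V :: "'v set" and E :: "('v \<times> 'v \<times> 'b letter) set"
    and WV :: "'v \<Rightarrow> real" and WE :: "'v \<Rightarrow> 'v \<Rightarrow> 'b letter \<Rightarrow> real"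
  assumes graph: "constraint_graph B V E"
    and weight: "is_weight B V E WV WE"
    and fin_supp: "finite_support V WV WE"
begin

lemma vertex_weight_nonneg: "v \<in> V \<Longrightarrow> WV v \<ge> 0"
  and edge_weight_nonneg: "WE v w s \<ge> 0"
  and edge_weight_off_E: "(v, w, s) \<notin> E \<Longrightarrow> WE v w s = 0"
  and out_weight: "v \<in> V \<Longrightarrow> s \<in> gens B \<Longrightarrow> WV v = (\<Sum>\<^sub>\<infinity>w\<in>V. WE v w s)"
  and in_weight: "v \<in> V \<Longrightarrow> s \<in> gens B \<Longrightarrow> WV v = (\<Sum>\<^sub>\<infinity>w\<in>V. WE w v s)"
  and edge_weight_sym: "s \<in> gens B \<Longrightarrow> WE v w s = WE w v (inv_letter s)"
  using weight unfolding is_weight_def by blast+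

lemma weight_edge_in_E:
  assumes "WE v w s \<noteq> 0" shows "(v, w, s) \<in> E \<and> v \<in> V \<and> w \<in> V \<and> s \<in> gens B"
proof -
  have "(v, w, s) \<in> E" using edge_weight_off_E assms by metis
  then show ?thesis using graph unfolding constraint_graph_def by blast
qed

text \<open>An edge weight is bounded by the weights of both endpoints, since the vertex weight is
  the (effectively finite) sum of the weights of its outgoing, resp. incoming, edges.\<close>
lemma weight_edge_le:
  assumes "WE v w s \<noteq> 0" shows "WE v w s \<le> WV v" and "WE v w s \<le> WV w"
proof -
  have vw: "v \<in> V" "w \<in> V" and s: "s \<in> gens B" using weight_edge_in_E[OF assms] by auto
  define supp where "supp = {(v, w, s). WE v w s \<noteq> 0}"
  have supp: "finite supp" using fin_supp by (simp add: finite_support_def supp_def)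
  define R where "R = {u \<in> V. WE v u s \<noteq> 0}"
  define C where "C = {u \<in> V. WE u w s \<noteq> 0}"
  have "R \<subseteq> (\<lambda>t. fst (snd t)) ` supp" "C \<subseteq> fst ` supp"
  proof
    fix u assume "u \<in> R"
    then have "(v, u, s) \<in> supp" by (simp add: R_def supp_def)
    then show "u \<in> (\<lambda>t. fst (snd t)) ` supp" by force
  next
    show "C \<subseteq> fst ` supp"
    proof
      fix u assume "u \<in> C"
      then have "(u, w, s) \<in> supp" by (simp add: C_def supp_def)
      then show "u \<in> fst ` supp" by force
    qed
  qed
  then have fin: "finite R" "finite C" using supp by (auto intro: finite_subset)
  have "WV v = sum (\<lambda>u. WE v u s) R"
    using out_weight[OF vw(1) s] fin by (subst (asm) infsum_eq_sum_superset[of R]) (auto simp: R_def)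
  moreover have "w \<in> R" using assms vw by (simp add: R_def)
  ultimately show "WE v w s \<le> WV v"
    using fin by (auto intro!: member_le_sum edge_weight_nonneg)
  have "WV w = sum (\<lambda>u. WE u w s) C"
    using in_weight[OF vw(2) s] fin by (subst (asm) infsum_eq_sum_superset[of C]) (auto simp: C_def)
  moreover have "v \<in> C" using assms vw by (simp add: C_def)
  ultimately show "WE v w s \<le> WV w"
    using fin by (auto intro!: member_le_sum edge_weight_nonneg)
qed

lemma weight_edge_support:
  assumes "WE v w s \<noteq> 0" shows "WV v > 0" and "WV w > 0"
  using weight_edge_le[OF assms] edge_weight_nonneg[of v w s] assms by linarith+

lemma weight_sums_on_support:
  defines "U \<equiv> {v \<in> V. WV v \<noteq> 0}"
  assumes "v \<in> V" "s \<in> gens B"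
  shows "(\<Sum>w\<in>U. WE v w s) = WV v" and "(\<Sum>w\<in>U. WE w v s) = WV v"
proof -
  have U: "finite U" "U \<subseteq> V" using fin_supp by (auto simp: U_def finite_support_def)
  have "WE v w s = 0" "WE w v s = 0" if "w \<in> V - U" for w
    using that weight_edge_support[of v w s] weight_edge_support[of w v s] by (force simp: U_def)+
  then show "(\<Sum>w\<in>U. WE v w s) = WV v" "(\<Sum>w\<in>U. WE w v s) = WV v"
    using out_weight[OF assms(2,3)] in_weight[OF assms(2,3)] infsum_eq_sum_superset[OF U] by simp_all
qed

lemma finite_action_of_weight:
  assumes B: "finite B" and v1: "v1 \<in> V" "WV v1 > 0"
  shows "\<exists>(\<Omega> :: ('v \<times> nat) set) \<pi>. finite \<Omega> \<and> (v1, 0) \<in> \<Omega> \<and> fst ` \<Omega> \<subseteq> V \<and> perms \<pi> \<Omega> \<and>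
     (\<forall>b\<in>B. \<forall>\<omega>\<in>\<Omega>. (fst \<omega>, fst (\<pi> b \<omega>), (b, True)) \<in> E \<and> (fst (\<pi> b \<omega>), fst \<omega>, (b, False)) \<in> E)"
proof -
  define U where "U = {v \<in> V. WV v \<noteq> 0}"
  have U: "finite U" "U \<subseteq> V" using fin_supp by (auto simp: U_def finite_support_def)
  have gens: "(b, True) \<in> gens B" if "b \<in> B" for b using that by (simp add: gens_def)
  have a_nonneg: "\<forall>v\<in>U. WV v \<ge> 0" and A_nonneg: "\<forall>b\<in>B. \<forall>v\<in>U. \<forall>w\<in>U. WE v w (b, True) \<ge> 0"
    using U(2) vertex_weight_nonneg edge_weight_nonneg by auto
  have A_rows: "\<forall>b\<in>B. \<forall>v\<in>U. (\<Sum>w\<in>U. WE v w (b, True)) = WV v"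
    and A_cols: "\<forall>b\<in>B. \<forall>v\<in>U. (\<Sum>w\<in>U. WE w v (b, True)) = WV v"
    using weight_sums_on_support gens U(2) unfolding U_def by blast+
  obtain n :: "'v \<Rightarrow> nat" and N :: "'b \<Rightarrow> 'v \<Rightarrow> 'v \<Rightarrow> nat"
    where n: "\<forall>v\<in>U. n v = 0 \<longleftrightarrow> WV v = 0"
      and N: "\<forall>b\<in>B. \<forall>v\<in>U. \<forall>w\<in>U. N b v w = 0 \<longleftrightarrow> WE v w (b, True) = 0"
      and rows: "\<forall>b\<in>B. \<forall>v\<in>U. (\<Sum>w\<in>U. N b v w) = n v"
      and cols: "\<forall>b\<in>B. \<forall>v\<in>U. (\<Sum>w\<in>U. N b w v) = n v"
    using nat_balanced_counts[OF U(1) B a_nonneg A_nonneg A_rows A_cols] by blast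
  define \<Omega> where "\<Omega> = Sigma U (\<lambda>v. {..<n v})"
  obtain \<pi> where \<pi>: "\<And>b. bij_betw (\<pi> b) \<Omega> \<Omega>"
    and \<pi>_N: "\<And>b \<omega>. b \<in> B \<Longrightarrow> \<omega> \<in> \<Omega> \<Longrightarrow> N b (fst \<omega>) (fst (\<pi> b \<omega>)) > 0"
    using perms_of_count_matrices[OF U(1) rows cols] unfolding \<Omega>_def by blast
  have edges: "(fst \<omega>, fst (\<pi> b \<omega>), (b, True)) \<in> E \<and> (fst (\<pi> b \<omega>), fst \<omega>, (b, False)) \<in> E"
    if b: "b \<in> B" and \<omega>: "\<omega> \<in> \<Omega>" for b \<omega>
  proof -
    have "\<pi> b \<omega> \<in> \<Omega>" using \<pi>[of b] \<omega> by (auto simp: bij_betw_def)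
    then have "fst \<omega> \<in> U" "fst (\<pi> b \<omega>) \<in> U" using \<omega> by (auto simp: \<Omega>_def)
    then have "WE (fst \<omega>) (fst (\<pi> b \<omega>)) (b, True) \<noteq> 0" using N \<pi>_N[OF b \<omega>] b by fastforce
    moreover have "WE (fst (\<pi> b \<omega>)) (fst \<omega>) (b, False) = WE (fst \<omega>) (fst (\<pi> b \<omega>)) (b, True)"
      using edge_weight_sym[OF gens[OF b]] by (simp add: inv_letter_def)
    ultimately show ?thesis using weight_edge_in_E by metis
  qed
  have "(v1, 0) \<in> \<Omega>" using n v1 by (auto simp: \<Omega>_def U_def)
  moreover have "finite \<Omega>" "fst ` \<Omega> \<subseteq> V" using U by (auto simp: \<Omega>_def)
  moreover have "perms \<pi> \<Omega>" using \<pi> by unfold_locales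
  ultimately show ?thesis using edges by (intro exI[of _ \<Omega>] exI[of _ \<pi>]) auto
qed

end

theorem lemma2p2:
  fixes B :: "'b set" and V :: "'v set" and E :: "('v \<times> 'v \<times> 'b letter) set"
    and WV :: "'v \<Rightarrow> real" and WE :: "'v \<Rightarrow> 'v \<Rightarrow> 'b letter \<Rightarrow> real" and v1 :: 'v
  assumes "finite B"
    and "constraint_graph B V E"
    and "is_weight B V E WV WE"
    and "finite_support V WV WE"
    and "v1 \<in> V" and "WV v1 > 0"
  shows "\<exists>x \<in> graph_subshift B V E. periodic B x \<and> x [] = v1"
proof -
  obtain \<Omega> :: "('v \<times> nat) set" and \<pi> where
    fin: "finite \<Omega>" and base: "(v1, 0) \<in> \<Omega>" and labels: "fst ` \<Omega> \<subseteq> V" and act: "perms \<pi> \<Omega>"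
    and edges: "\<forall>b\<in>B. \<forall>\<omega>\<in>\<Omega>.
      (fst \<omega>, fst (\<pi> b \<omega>), (b, True)) \<in> E \<and> (fst (\<pi> b \<omega>), fst \<omega>, (b, False)) \<in> E"
    using finite_action_of_weight[OF assms(2-4) assms(1,5,6)] by blast
  interpret perms \<pi> \<Omega> by (fact act)
  let ?x = "orbit_config \<pi> \<Omega> fst (v1, 0)"
  have "?x \<in> graph_subshift B V E"
    using orbit_config_in_subshift[OF base labels] edges by blast
  moreover have "periodic B ?x" using orbit_config_periodic[OF fin base] .
  moreover have "?x [] = v1" by (simp add: orbit_config_def)
  ultimately show ?thesis by blast
qed

end
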